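(* For $0<r_\varepsilon,r'_\varepsilon<1$ ($\varepsilon=+,-,0$) and $\mu_i,\mu'_i\in[0,2\pi)$ ($i=1,2,3$), let \begin{align*} U_{r,\mu}={}&|e_1^{-1}\rangle\langle r_0e_1^0+e^{i\mu_1}s_0e_2^0|+|e_2^{1}\rangle\langle -e^{i\mu_2}s_0e_1^0+e^{i(\mu_1+\mu_2)}r_0e_2^0|\\ &+\sum_{n\ge1}|e_1^{n-1}\rangle\langle r_+e_1^n+s_+e_2^n|+|e_2^{n+1}\rangle\langle -e^{i\mu_3}s_+e_1^n+e^{i\mu_3}r_+e_2^n|\\ &+\sum_{n\le-1}|e_1^{n-1}\rangle\langle r_-e_1^n+s_-e_2^n|+|e_2^{n+1}\rangle\langle -s_-e_1^n+r_-e_2^n|, \end{align*} with $s_\varepsilon=\sqrt{1-r_\varepsilon^2}$, where $r=(r_+,r_-,r_0)$, $\mu=(\mu_1,\mu_2,\mu_3)$, and define $U_{r',\mu'}$ analogously. Then $U_{r,\mu}$ and $U_{r',\mu'}$ are unitary equivalent if and only if $r=r'$ and $\mu=\mu'$.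
   Context: Let $\mathcal H_n=\mathbb C^2$ for $n\in\mathbb Z$, $\mathcal H=\bigoplus_{n\in\mathbb Z}\mathcal H_n$, and $\{e_1^n,e_2^n\}$ the standard basis of $\mathcal H_n$. Dirac notation: $|x\rangle\langle y|$ is the operator $z\mapsto\langle y,z\rangle x$ (inner product conjugate-linear in the first argument). Since a unitary $U$ and $e^{i\lambda}U$ are identified, unitaries $U_1,U_2$ on $\mathcal H$ are called unitary equivalent if there exist $\lambda\in\mathbb R$ and a unitary $W=\bigoplus_nW_n$ ($W_n$ unitary on $\mathcal H_n$) with $e^{i\lambda}WU_1W^*=U_2$. *)

theory Defs
  imports "HOL-Analysis.Analysis"
begin

text \<open>Vectors of H = direct sum over n in Z of C^2 are represented by their
coordinates x n a (a in {1,2}); operators by their matrix entries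
M (m,a) (n,b) = <e_a^m, M e_b^n>.\<close>

type_synonym hvec = "int \<Rightarrow> nat \<Rightarrow> complex"
type_synonym hop = "int \<times> nat \<Rightarrow> int \<times> nat \<Rightarrow> complex"

definition ebasis :: "nat \<Rightarrow> int \<Rightarrow> hvec" where
  "ebasis a n = (\<lambda>m b. if m = n \<and> b = a then 1 else 0)"

definition ketbra :: "hvec \<Rightarrow> hvec \<Rightarrow> hop" where
  "ketbra x y = (\<lambda>(m,a) (n,b). x m a * cnj (y n b))"

definition vadd :: "hvec \<Rightarrow> hvec \<Rightarrow> hvec" where
  "vadd x y = (\<lambda>n a. x n a + y n a)"

definition vscale :: "complex \<Rightarrow> hvec \<Rightarrow> hvec" where
  "vscale c x = (\<lambda>n a. c * x n a)"

definition opadd :: "hop \<Rightarrow> hop \<Rightarrow> hop" where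
  "opadd A B = (\<lambda>i j. A i j + B i j)"

definition sval :: "real \<Rightarrow> real" where
  "sval r = sqrt (1 - r\<^sup>2)"

text \<open>The n-th summand of U_{r,mu} (the two rank-one terms whose bra-vectors are
supported in H_n). r = (r_+, r_-, r_0), mu = (mu_1, mu_2, mu_3).\<close>
definition Uterm :: "real \<times> real \<times> real \<Rightarrow> real \<times> real \<times> real \<Rightarrow> int \<Rightarrow> hop" where
  "Uterm r \<mu> n =
    (case r of (rp, rm, r0) \<Rightarrow> case \<mu> of (\<mu>1, \<mu>2, \<mu>3) \<Rightarrow>
     if n = 0 then
       opadd
        (ketbra (ebasis 1 (-1))
           (vadd (vscale (complex_of_real r0) (ebasis 1 0))
                 (vscale (exp (\<i> * \<mu>1) * complex_of_real (sval r0)) (ebasis 2 0))))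
        (ketbra (ebasis 2 1)
           (vadd (vscale (- exp (\<i> * \<mu>2) * complex_of_real (sval r0)) (ebasis 1 0))
                 (vscale (exp (\<i> * (\<mu>1 + \<mu>2)) * complex_of_real r0) (ebasis 2 0))))
     else if n \<ge> 1 then
       opadd
        (ketbra (ebasis 1 (n - 1))
           (vadd (vscale (complex_of_real rp) (ebasis 1 n))
                 (vscale (complex_of_real (sval rp)) (ebasis 2 n))))
        (ketbra (ebasis 2 (n + 1))
           (vadd (vscale (- exp (\<i> * \<mu>3) * complex_of_real (sval rp)) (ebasis 1 n))
                 (vscale (exp (\<i> * \<mu>3) * complex_of_real rp) (ebasis 2 n))))
     else
       opadd
        (ketbra (ebasis 1 (n - 1))
           (vadd (vscale (complex_of_real rm) (ebasis 1 n))
                 (vscale (complex_of_real (sval rm)) (ebasis 2 n))))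
        (ketbra (ebasis 2 (n + 1))
           (vadd (vscale (- complex_of_real (sval rm)) (ebasis 1 n))
                 (vscale (complex_of_real rm) (ebasis 2 n)))))"

text \<open>U_{r,mu} = sum over n of Uterm r mu n. Since the n-th summand has nonzero
matrix entries only in the columns (n,b), the entry in column (n,b) of the
(pointwise convergent) sum equals the entry of the n-th summand.\<close>
definition Uop :: "real \<times> real \<times> real \<Rightarrow> real \<times> real \<times> real \<Rightarrow> hop" where
  "Uop r \<mu> = (\<lambda>(m,a) (n,b). Uterm r \<mu> n (m,a) (n,b))"

definition unitary2 :: "(nat \<Rightarrow> nat \<Rightarrow> complex) \<Rightarrow> bool" where
  "unitary2 A \<longleftrightarrow> (\<forall>i\<in>{1,2}. \<forall>j\<in>{1,2}.
      (\<Sum>k\<in>{1,2}. A i k * cnj (A j k)) = (if i = j then 1 else 0))"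

text \<open>Matrix entries of W U W^* for block diagonal W = direct sum of W_n.\<close>
definition conj_block :: "(int \<Rightarrow> nat \<Rightarrow> nat \<Rightarrow> complex) \<Rightarrow> hop \<Rightarrow> hop" where
  "conj_block W U = (\<lambda>(m,a) (n,b).
      \<Sum>c\<in>{1,2}. \<Sum>d\<in>{1,2}. W m a c * U (m,c) (n,d) * cnj (W n b d))"

definition unitary_equiv :: "hop \<Rightarrow> hop \<Rightarrow> bool" where
  "unitary_equiv U1 U2 \<longleftrightarrow>
    (\<exists>(lam::real) (W :: int \<Rightarrow> nat \<Rightarrow> nat \<Rightarrow> complex).
       (\<forall>n. unitary2 (W n)) \<and>
       (\<forall>m n. \<forall>a\<in>{1,2}. \<forall>b\<in>{1,2}.
          exp (\<i> * complex_of_real lam) * conj_block W U1 (m,a) (n,b) = U2 (m,a) (n,b)))"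

end

theory Submission
  imports Defs
begin

text \<open>Every U_{r,\<mu>} maps H_n into H_{n-1} \<oplus> H_{n+1}, with nonzero entries
from e_1^n to e_1^{n-1} and from e_2^n to e_2^{n+1}. For a block unitary W conjugating
one such operator into another, the vanishing blocks of W U W^* between H_{n+1} and the
e_2-row of H_n (and between H_{n-1} and the e_1-row of H_n) force every W_n to be diagonal.
Conjugation by a diagonal unitary multiplies each matrix entry by a phase, so the moduli
of the entries, i.e. the r's, are invariant, and so is the product of the two entries
linking e_1^n and e_2^{n+1}, up to the factor e^{2i\<lambda>}. The loop between H_{-2} and
H_{-1} carries no \<mu> and forces e^{2i\<lambda>} = 1; the loops around H_{-1}, H_0, H_1 then
recover e^{-i\<mu>_1}, e^{-i\<mu>_2}, e^{-i\<mu>_3}.\<close>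

definition shift_supported :: "hop \<Rightarrow> bool" where
  "shift_supported U \<longleftrightarrow>
     (\<forall>m a n b. \<not> (m = n - 1 \<and> a = 1) \<and> \<not> (m = n + 1 \<and> a = 2) \<longrightarrow> U (m,a) (n,b) = 0)"

definition diagonal_gauge :: "complex \<Rightarrow> (int \<Rightarrow> nat \<Rightarrow> complex) \<Rightarrow> hop \<Rightarrow> hop \<Rightarrow> bool" where
  "diagonal_gauge c D U U' \<longleftrightarrow> norm c = 1 \<and> (\<forall>m. \<forall>a\<in>{1,2}. norm (D m a) = 1) \<and>
     (\<forall>m n. \<forall>a\<in>{1,2}. \<forall>b\<in>{1,2}. c * D m a * U (m,a) (n,b) * cnj (D n b) = U' (m,a) (n,b))"

lemma mult_cnj_eq_1_iff_norm: "z * cnj z = 1 \<longleftrightarrow> norm z = 1"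
proof -
  have "z * cnj z = 1 \<longleftrightarrow> (norm z)\<^sup>2 = 1"
    by (metis complex_norm_square of_real_eq_1_iff)
  then show ?thesis by (simp add: abs_square_eq_1)
qed

lemma unitary2_orthogonal_rows_zero:
  assumes "unitary2 A" and "\<forall>i\<in>{1,2}. p1 * cnj (A i 1) + p2 * cnj (A i 2) = 0"
  shows "p1 = 0 \<and> p2 = 0"
proof -
  have e1: "p1 * cnj (A 1 1) + p2 * cnj (A 1 2) = 0"
    and e2: "p1 * cnj (A 2 1) + p2 * cnj (A 2 2) = 0"
    using assms(2) by auto
  have n1: "A 1 1 * cnj (A 1 1) + A 1 2 * cnj (A 1 2) = 1"
    and n2: "A 2 1 * cnj (A 2 1) + A 2 2 * cnj (A 2 2) = 1"
    and o: "A 1 1 * cnj (A 2 1) + A 1 2 * cnj (A 2 2) = 0"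
    using assms(1) unfolding unitary2_def by auto
  define D where "D = A 1 1 * A 2 2 - A 1 2 * A 2 1"
  have "D * cnj D = (A 1 1 * cnj (A 1 1) + A 1 2 * cnj (A 1 2)) * (A 2 1 * cnj (A 2 1) + A 2 2 * cnj (A 2 2))
     - (A 1 1 * cnj (A 2 1) + A 1 2 * cnj (A 2 2)) * cnj (A 1 1 * cnj (A 2 1) + A 1 2 * cnj (A 2 2))"
    unfolding D_def by (simp add: algebra_simps)
  with n1 n2 o have "cnj D \<noteq> 0" by auto
  moreover have "p1 * cnj D = (p1 * cnj (A 1 1) + p2 * cnj (A 1 2)) * cnj (A 2 2)
      - (p1 * cnj (A 2 1) + p2 * cnj (A 2 2)) * cnj (A 1 2)"
    and "p2 * cnj D = (p1 * cnj (A 2 1) + p2 * cnj (A 2 2)) * cnj (A 1 1)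
      - (p1 * cnj (A 1 1) + p2 * cnj (A 1 2)) * cnj (A 2 1)"
    unfolding D_def by (simp_all add: algebra_simps)
  then have "p1 * cnj D = 0" "p2 * cnj D = 0"
    unfolding e1 e2 by simp_all
  ultimately show ?thesis by simp
qed

text \<open>If row c of the (m,n) block of U is its only nonzero row and row a of the (m,n)
block of W U W^* vanishes, then (W_m U_{mn}) has zero row a, so W_m has a zero entry (a,c).\<close>
lemma conj_block_row_vanishes:
  assumes W: "unitary2 (W n)"
    and c: "c = 1 \<and> c' = 2 \<or> c = 2 \<and> c' = 1"
    and other_row: "\<forall>d. U (m,c') (n,d) = 0"
    and vanish: "\<forall>b\<in>{1,2}. conj_block W U (m,a) (n,b) = 0"
    and entry: "d \<in> {1,2}" "U (m,c) (n,d) \<noteq> 0"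
  shows "W m a c = 0"
proof -
  have "conj_block W U (m,a) (n,b) =
      W m a c * U (m,c) (n,1) * cnj (W n b 1) + W m a c * U (m,c) (n,2) * cnj (W n b 2)" for b
    using c other_row unfolding conj_block_def by (auto simp: algebra_simps)
  with vanish have "\<forall>b\<in>{1,2}. W m a c * U (m,c) (n,1) * cnj (W n b 1)
      + W m a c * U (m,c) (n,2) * cnj (W n b 2) = 0"
    by simp
  then have "W m a c * U (m,c) (n,1) = 0 \<and> W m a c * U (m,c) (n,2) = 0"
    using unitary2_orthogonal_rows_zero[OF W] by blast
  then show ?thesis using entry by auto
qed

lemma shift_supported_conj_block_diagonal:
  assumes W: "\<forall>n. unitary2 (W n)" and c: "c \<noteq> 0"
    and U: "shift_supported U" and U': "shift_supported U'"
    and down: "\<forall>n. U (n - 1, 1) (n, 1) \<noteq> 0" and up: "\<forall>n. U (n + 1, 2) (n, 2) \<noteq> 0"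
    and eq: "\<forall>m n. \<forall>a\<in>{1,2}. \<forall>b\<in>{1,2}. c * conj_block W U (m,a) (n,b) = U' (m,a) (n,b)"
  shows "W k 2 1 = 0" and "W k 1 2 = 0"
proof -
  have vanish: "\<forall>b\<in>{1,2}. conj_block W U (k,a) (n,b) = 0"
    if "a \<in> {1,2}" "\<forall>b. U' (k,a) (n,b) = 0" for a n
    using eq that c by (metis mult_eq_0_iff)
  show "W k 2 1 = 0"
    by (rule conj_block_row_vanishes[of W "k + 1" 1 2 U k 2 1])
       (use W U U' down[rule_format, of "k + 1"] vanish[of 2 "k + 1"]
        in \<open>auto simp: shift_supported_def\<close>)
  show "W k 1 2 = 0"
    by (rule conj_block_row_vanishes[of W "k - 1" 2 1 U k 1 2])
       (use W U U' up[rule_format, of "k - 1"] vanish[of 1 "k - 1"]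
        in \<open>auto simp: shift_supported_def\<close>)
qed

lemma conj_block_diagonal:
  assumes "\<forall>k. W k 2 1 = 0 \<and> W k 1 2 = 0" "a \<in> {1,2}" "b \<in> {1,2}"
  shows "conj_block W U (m,a) (n,b) = W m a a * U (m,a) (n,b) * cnj (W n b b)"
  using assms unfolding conj_block_def by auto

lemma unitary2_diagonal_norm:
  assumes "unitary2 A" "A 1 2 = 0" "A 2 1 = 0" "a \<in> {1,2}"
  shows "norm (A a a) = 1"
  using assms unfolding unitary2_def mult_cnj_eq_1_iff_norm[symmetric] by auto

lemma unitary_equiv_imp_diagonal_gauge:
  assumes "unitary_equiv U U'" "shift_supported U" "shift_supported U'"
    and "\<forall>n. U (n - 1, 1) (n, 1) \<noteq> 0" "\<forall>n. U (n + 1, 2) (n, 2) \<noteq> 0"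
  shows "\<exists>c D. diagonal_gauge c D U U'"
proof -
  obtain lam W where W: "\<forall>n. unitary2 (W n)"
    and eq: "\<forall>m n. \<forall>a\<in>{1,2}. \<forall>b\<in>{1,2}.
      exp (\<i> * complex_of_real lam) * conj_block W U (m,a) (n,b) = U' (m,a) (n,b)"
    using assms(1) unfolding unitary_equiv_def by blast
  have diag: "\<forall>k. W k 2 1 = 0 \<and> W k 1 2 = 0"
    using shift_supported_conj_block_diagonal[OF W _ assms(2-5) eq] by simp
  have "norm (W m a a) = 1" if "a \<in> {1,2}" for m a
    using unitary2_diagonal_norm W diag that by blast
  moreover have "exp (\<i> * complex_of_real lam) * W m a a * U (m,a) (n,b) * cnj (W n b b) = U' (m,a) (n,b)"
    if "a \<in> {1,2}" "b \<in> {1,2}" for m n a b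
    using eq[rule_format, OF that] conj_block_diagonal[OF diag that] by (simp add: mult.assoc)
  ultimately have "diagonal_gauge (exp (\<i> * complex_of_real lam)) (\<lambda>m a. W m a a) U U'"
    unfolding diagonal_gauge_def by simp
  then show ?thesis by blast
qed

lemma unitary_equiv_refl: "unitary_equiv U U"
  unfolding unitary_equiv_def
  by (intro exI[of _ 0] exI[of _ "\<lambda>n i j. if i = j then 1 else 0"])
     (auto simp: unitary2_def conj_block_def)

lemma diagonal_gauge_norm:
  assumes "diagonal_gauge c D U U'" "a \<in> {1,2}" "b \<in> {1,2}"
  shows "norm (U (m,a) (n,b)) = norm (U' (m,a) (n,b))"
proof -
  have "U' (m,a) (n,b) = c * D m a * U (m,a) (n,b) * cnj (D n b)"
    using assms unfolding diagonal_gauge_def by metis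
  moreover have "norm c = 1" "norm (D m a) = 1" "norm (D n b) = 1"
    using assms unfolding diagonal_gauge_def by auto
  ultimately show ?thesis by (simp add: norm_mult)
qed

text \<open>The phases of e_a^m and e_b^n cancel in the product of the two entries linking them.\<close>
lemma diagonal_gauge_loop:
  assumes "diagonal_gauge c D U U'" "a \<in> {1,2}" "b \<in> {1,2}"
  shows "c\<^sup>2 * (U (m,a) (n,b) * U (n,b) (m,a)) = U' (m,a) (n,b) * U' (n,b) (m,a)"
proof -
  have unit: "D m a * cnj (D m a) = 1" "D n b * cnj (D n b) = 1"
    using assms unfolding diagonal_gauge_def mult_cnj_eq_1_iff_norm by auto
  have "U' (m,a) (n,b) * U' (n,b) (m,a) =
      (c * D m a * U (m,a) (n,b) * cnj (D n b)) * (c * D n b * U (n,b) (m,a) * cnj (D m a))"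
    using assms unfolding diagonal_gauge_def by metis
  also have "\<dots> = c\<^sup>2 * (U (m,a) (n,b) * U (n,b) (m,a))
      * (D m a * cnj (D m a)) * (D n b * cnj (D n b))"
    by (simp add: algebra_simps power2_eq_square)
  finally show ?thesis using unit by simp
qed

lemmas Uop_simps = Uop_def Uterm_def opadd_def ketbra_def ebasis_def vadd_def vscale_def

lemma shift_supported_Uop: "shift_supported (Uop r \<mu>)"
  unfolding shift_supported_def by (cases r; cases \<mu>) (auto simp: Uop_simps)

text \<open>Since \<open>1 = Suc 0\<close> is a simp rule on nat, the entry lemmas below are passed to
the simplifier as premises (where they get normalised too) rather than as rewrite rules.\<close>
lemma Uop_down_entry:
  "Uop (rp,rm,r0) \<mu> (n - 1, 1) (n, 1) = complex_of_real (if n = 0 then r0 else if n \<ge> 1 then rp else rm)"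
  by (cases \<mu>) (auto simp: Uop_simps)

lemma Uop_up_entry_nonzero:
  "rp \<noteq> 0 \<Longrightarrow> rm \<noteq> 0 \<Longrightarrow> r0 \<noteq> 0 \<Longrightarrow> Uop (rp,rm,r0) \<mu> (n + 1, 2) (n, 2) \<noteq> 0"
  by (cases \<mu>) (auto simp: Uop_simps)

lemma Uop_loop_products:
  fixes rp rm r0 \<mu>1 \<mu>2 \<mu>3 :: real
  defines "U \<equiv> Uop (rp,rm,r0) (\<mu>1,\<mu>2,\<mu>3)"
  shows "U (-1,2) (-2,1) * U (-2,1) (-1,2) = - complex_of_real ((sval rm)\<^sup>2)"
    and "U (0,2) (-1,1) * U (-1,1) (0,2) =
      - complex_of_real (sval rm * sval r0) * cnj (exp (\<i> * complex_of_real \<mu>1))"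
    and "U (1,2) (0,1) * U (0,1) (1,2) =
      - complex_of_real (sval r0 * sval rp) * cnj (exp (\<i> * complex_of_real \<mu>2))"
    and "U (2,2) (1,1) * U (1,1) (2,2) =
      - complex_of_real ((sval rp)\<^sup>2) * cnj (exp (\<i> * complex_of_real \<mu>3))"
  unfolding U_def by (simp_all add: Uop_simps power2_eq_square)

lemma sval_pos: "0 < r \<Longrightarrow> r < 1 \<Longrightarrow> 0 < sval r"
  unfolding sval_def by (simp add: power_less_one_iff abs_square_less_1)

lemma exp_i_eq_imp_eq_2pi:
  assumes "exp (\<i> * complex_of_real a) = exp (\<i> * complex_of_real b)"
    "0 \<le> a" "a < 2 * pi" "0 \<le> b" "b < 2 * pi"
  shows "a = b"
proof -
  have "Arg2pi (exp (\<i> * complex_of_real a)) = a" "Arg2pi (exp (\<i> * complex_of_real b)) = b"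
    using Arg2pi_unique[of 1 a] Arg2pi_unique[of 1 b] assms(2-5) by auto
  with assms(1) show ?thesis by metis
qed

lemma Uop_diagonal_gauge_rigid:
  assumes gauge: "diagonal_gauge c D (Uop (rp, rm, r0) (\<mu>1, \<mu>2, \<mu>3)) (Uop (rp', rm', r0') (\<mu>1', \<mu>2', \<mu>3'))"
    and r: "0 < rp" "rp < 1" "0 < rm" "rm < 1" "0 < r0" "r0 < 1" "0 < rp'" "0 < rm'" "0 < r0'"
    and \<mu>: "\<forall>x\<in>{\<mu>1, \<mu>2, \<mu>3, \<mu>1', \<mu>2', \<mu>3'}. 0 \<le> x \<and> x < 2 * pi"
  shows "(rp, rm, r0) = (rp', rm', r0') \<and> (\<mu>1, \<mu>2, \<mu>3) = (\<mu>1', \<mu>2', \<mu>3')"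
proof -
  let ?U = "Uop (rp, rm, r0) (\<mu>1, \<mu>2, \<mu>3)" and ?U' = "Uop (rp', rm', r0') (\<mu>1', \<mu>2', \<mu>3')"
  have norm_inv: "\<bar>if n = 0 then r0 else if n \<ge> 1 then rp else rm\<bar>
      = \<bar>if n = 0 then r0' else if n \<ge> 1 then rp' else rm'\<bar>" for n :: int
    using diagonal_gauge_norm[OF gauge, of 1 1 "n - 1" n] unfolding Uop_down_entry norm_of_real
    by simp
  have loop_inv: "c\<^sup>2 * (?U (n + 1, 2) (n, 1) * ?U (n, 1) (n + 1, 2))
      = ?U' (n + 1, 2) (n, 1) * ?U' (n, 1) (n + 1, 2)" for n
    by (rule diagonal_gauge_loop[OF gauge]) simp_all
  have "rp = rp'" "rm = rm'" "r0 = r0'"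
    using norm_inv[of 1] norm_inv[of "-1"] norm_inv[of 0] r by simp_all
  moreover have s: "sval rp \<noteq> 0" "sval rm \<noteq> 0" "sval r0 \<noteq> 0"
    using sval_pos r by (metis less_irrefl)+
  ultimately have "c\<^sup>2 = 1"
    using loop_inv[of "-2"] Uop_loop_products(1) by simp
  then have "exp (\<i> * complex_of_real \<mu>1) = exp (\<i> * complex_of_real \<mu>1')"
    and "exp (\<i> * complex_of_real \<mu>2) = exp (\<i> * complex_of_real \<mu>2')"
    and "exp (\<i> * complex_of_real \<mu>3) = exp (\<i> * complex_of_real \<mu>3')"
    using loop_inv[of "-1"] loop_inv[of 0] loop_inv[of 1] Uop_loop_products(2-4) s
      \<open>rp = rp'\<close> \<open>rm = rm'\<close> \<open>r0 = r0'\<close>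
    by simp_all
  then show ?thesis
    using exp_i_eq_imp_eq_2pi \<mu> \<open>rp = rp'\<close> \<open>rm = rm'\<close> \<open>r0 = r0'\<close> by auto
qed

theorem theorem2p8:
  fixes rp rm r0 rp' rm' r0' \<mu>1 \<mu>2 \<mu>3 \<mu>1' \<mu>2' \<mu>3' :: real
  assumes "0 < rp" "rp < 1" "0 < rm" "rm < 1" "0 < r0" "r0 < 1"
    and "0 < rp'" "rp' < 1" "0 < rm'" "rm' < 1" "0 < r0'" "r0' < 1"
    and "\<forall>x\<in>{\<mu>1, \<mu>2, \<mu>3, \<mu>1', \<mu>2', \<mu>3'}. 0 \<le> x \<and> x < 2 * pi"
  shows "unitary_equiv (Uop (rp, rm, r0) (\<mu>1, \<mu>2, \<mu>3)) (Uop (rp', rm', r0') (\<mu>1', \<mu>2', \<mu>3'))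
     \<longleftrightarrow> (rp, rm, r0) = (rp', rm', r0') \<and> (\<mu>1, \<mu>2, \<mu>3) = (\<mu>1', \<mu>2', \<mu>3')"
proof
  assume "unitary_equiv (Uop (rp, rm, r0) (\<mu>1, \<mu>2, \<mu>3)) (Uop (rp', rm', r0') (\<mu>1', \<mu>2', \<mu>3'))"
  moreover have "\<forall>n. Uop (rp, rm, r0) (\<mu>1, \<mu>2, \<mu>3) (n - 1, 1) (n, 1) \<noteq> 0"
    using assms Uop_down_entry by simp
  moreover have "\<forall>n. Uop (rp, rm, r0) (\<mu>1, \<mu>2, \<mu>3) (n + 1, 2) (n, 2) \<noteq> 0"
    using assms Uop_up_entry_nonzero by simp
  ultimately obtain c D where
    "diagonal_gauge c D (Uop (rp, rm, r0) (\<mu>1, \<mu>2, \<mu>3)) (Uop (rp', rm', r0') (\<mu>1', \<mu>2', \<mu>3'))"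
    using unitary_equiv_imp_diagonal_gauge shift_supported_Uop by blast
  then show "(rp, rm, r0) = (rp', rm', r0') \<and> (\<mu>1, \<mu>2, \<mu>3) = (\<mu>1', \<mu>2', \<mu>3')"
    using Uop_diagonal_gauge_rigid assms by blast
qed (simp add: unitary_equiv_refl)

end
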